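(* Let $\alpha$ be an ordinal and let $\mathcal{X},\mathcal{Y}$ be families of metric spaces with $\mathcal{X},\mathcal{Y}\in\mathfrak{C}_\alpha$. Then $\mathcal{X}\otimes\mathcal{Y}\in\mathfrak{C}_\alpha$.
   Context: $\mathcal{X}\otimes\mathcal{Y}=\{X\times Y\colon X\in\mathcal{X},Y\in\mathcal{Y}\}$, where $X\times Y$ carries the metric $d((x,y),(x',y'))=\sqrt{d_X(x,x')^2+d_Y(y,y')^2}$. A family $\mathcal{U}$ of metric subspaces of a metric space $(X,d)$ is $r$-disjoint if $d(x,y)>r$ whenever $x\in U$, $y\in U'$, $U\neq U'$ in $\mathcal{U}$. For families $\mathcal{X},\mathcal{Y}$ and $R\in\mathbb{R}^{\mathbb{N}}$, $\mathcal{X}\xrightarrow{R}\mathcal{Y}$ means: there is an integer $k$ such that for each $X\in\mathcal{X}$ there are subcollections $\mathcal{U}_1,\dots,\mathcal{U}_k\subseteq\mathcal{Y}$ of subspaces of $X$, each $\mathcal{U}_i$ being $R_i$-disjoint, with $\bigcup_i\mathcal{U}_i$ covering $X$. A family is bounded if the diameters of its members are uniformly bounded. $\mathfrak{C}_0$ is the class of bounded families; for an ordinal $\alpha>0$, $\mathfrak{C}_\alpha$ is the class of families $\mathcal{X}$ such that for every $R\in\mathbb{R}^{\mathbb{N}}$ there exist $\beta<\alpha$ and $\mathcal{Y}\in\mathfrak{C}_\beta$ with $\mathcal{X}\xrightarrow{R}\mathcal{Y}$. *)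

theory Defs
  imports "HOL-Analysis.Analysis"
begin

text \<open>A metric space is an element of the library type 'a metric; a family of
metric spaces is a set of them.  Ordinals are elements of an arbitrary
well-ordered type.\<close>

definition metric_tensor :: "'a metric set \<Rightarrow> 'b metric set \<Rightarrow> ('a \<times> 'b) metric set" where
  "metric_tensor XX YY = {prod_metric X Y | X Y. X \<in> XX \<and> Y \<in> YY}"

definition is_subspace :: "'a metric \<Rightarrow> 'a metric \<Rightarrow> bool" where
  "is_subspace U X \<longleftrightarrow> mspace U \<subseteq> mspace X \<and> U = submetric X (mspace U)"

definition r_disjoint :: "real \<Rightarrow> 'a metric \<Rightarrow> 'a metric set \<Rightarrow> bool" where
  "r_disjoint r X UU \<longleftrightarrow>
     (\<forall>U\<in>UU. \<forall>U'\<in>UU. U \<noteq> U' \<longrightarrow>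
        (\<forall>x\<in>mspace U. \<forall>y\<in>mspace U'. mdist X x y > r))"

definition bounded_family :: "'a metric set \<Rightarrow> bool" where
  "bounded_family XX \<longleftrightarrow>
     (\<exists>B::real. \<forall>X\<in>XX. \<forall>x\<in>mspace X. \<forall>y\<in>mspace X. mdist X x y \<le> B)"

text \<open>XX --R--> YY; the sequence R is indexed by the positive naturals (R 0 unused).\<close>
definition fam_arrow :: "(nat \<Rightarrow> real) \<Rightarrow> 'a metric set \<Rightarrow> 'a metric set \<Rightarrow> bool" where
  "fam_arrow R XX YY \<longleftrightarrow>
     (\<exists>k::nat. \<forall>X\<in>XX. \<exists>UU::nat \<Rightarrow> 'a metric set.
        (\<forall>i\<in>{1..k}. UU i \<subseteq> YY \<and> (\<forall>U\<in>UU i. is_subspace U X) \<and> r_disjoint (R i) X (UU i))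
        \<and> mspace X \<subseteq> (\<Union>i\<in>{1..k}. \<Union>U\<in>UU i. mspace U))"

inductive inC :: "'o::wellorder \<Rightarrow> 'a metric set \<Rightarrow> bool" where
  zero: "(\<forall>\<beta>. \<not> \<beta> < \<alpha>) \<Longrightarrow> bounded_family XX \<Longrightarrow> inC \<alpha> XX"
| pos: "(\<exists>\<beta>. \<beta> < \<alpha>) \<Longrightarrow> (\<forall>R. \<exists>\<beta><\<alpha>. \<exists>YY. inC \<beta> YY \<and> fam_arrow R XX YY) \<Longrightarrow> inC \<alpha> XX"

end

theory Submission
  imports Defs
begin

text \<open>Induction on \<alpha>; for bounded families the claim is immediate.  For the step, given R,
decompose the X-factors with respect to a coarse sequence R' and, for the i-th X-family,
decompose the Y-factors with respect to the i-th block of R.  Products of pieces of the i-th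
X-family and of the j-th Y-family are disjoint at the scale of the (i, j)-th entry of R, since
the product metric dominates both coordinate metrics.  The block lengths are the numbers of
Y-families, which depend on R only through the earlier blocks, so the blocks can be laid out
recursively, and R'_i is chosen to dominate R on the whole i-th block.\<close>

definition is_decomposition ::
  "('i \<Rightarrow> real) \<Rightarrow> 'i set \<Rightarrow> 'a metric \<Rightarrow> 'a metric set \<Rightarrow> ('i \<Rightarrow> 'a metric set) \<Rightarrow> bool" where
  "is_decomposition r I X YY UU \<longleftrightarrow>
     (\<forall>i\<in>I. UU i \<subseteq> YY \<and> (\<forall>U\<in>UU i. is_subspace U X) \<and> r_disjoint (r i) X (UU i))
     \<and> mspace X \<subseteq> (\<Union>i\<in>I. \<Union>U\<in>UU i. mspace U)"

definition fam_arrow_at :: "(nat \<Rightarrow> real) \<Rightarrow> nat \<Rightarrow> 'a metric set \<Rightarrow> 'a metric set \<Rightarrow> bool" where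
  "fam_arrow_at R k XX YY \<longleftrightarrow> (\<forall>X\<in>XX. \<exists>UU. is_decomposition R {1..k} X YY UU)"

lemma fam_arrow_iff_fam_arrow_at: "fam_arrow R XX YY \<longleftrightarrow> (\<exists>k. fam_arrow_at R k XX YY)"
  by (simp add: fam_arrow_def fam_arrow_at_def is_decomposition_def)

lemma is_decomposition_mono:
  "is_decomposition r I X YY UU \<Longrightarrow> YY \<subseteq> YY' \<Longrightarrow> is_decomposition r I X YY' UU"
  by (auto simp: is_decomposition_def)

lemma is_decomposition_reindex:
  assumes "is_decomposition (r \<circ> g) I X YY F" "inj_on g I" "g ` I \<subseteq> J"
  shows "\<exists>UU. is_decomposition r J X YY UU"
proof
  define UU where "UU n = (if n \<in> g ` I then F (the_inv_into I g n) else {})" for n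
  have UU_g: "UU (g t) = F t" if "t \<in> I" for t
    using that assms(2) by (simp add: UU_def the_inv_into_f_f)
  show "is_decomposition r J X YY UU"
    unfolding is_decomposition_def
  proof (rule conjI[OF ballI])
    fix n assume "n \<in> J"
    show "UU n \<subseteq> YY \<and> (\<forall>U\<in>UU n. is_subspace U X) \<and> r_disjoint (r n) X (UU n)"
    proof (cases "n \<in> g ` I")
      case True
      then obtain t where "t \<in> I" "n = g t" by blast
      then show ?thesis
        using assms(1) UU_g unfolding is_decomposition_def by auto
    qed (simp add: UU_def r_disjoint_def)
  next
    show "mspace X \<subseteq> (\<Union>n\<in>J. \<Union>U\<in>UU n. mspace U)"
    proof
      fix x assume "x \<in> mspace X"
      then obtain t U where "t \<in> I" "U \<in> F t" "x \<in> mspace U"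
        using assms(1) unfolding is_decomposition_def by blast
      then show "x \<in> (\<Union>n\<in>J. \<Union>U\<in>UU n. mspace U)"
        using assms(3) UU_g by blast
    qed
  qed
qed

lemma fam_arrow_at_mono:
  assumes "fam_arrow_at R k XX YY" "k \<le> k'" "YY \<subseteq> YY'"
  shows "fam_arrow_at R k' XX YY'"
  unfolding fam_arrow_at_def
proof
  fix X assume "X \<in> XX"
  then obtain UU where "is_decomposition R {1..k} X YY UU"
    using assms(1) by (auto simp: fam_arrow_at_def)
  then have "is_decomposition (R \<circ> id) {1..k} X YY' UU"
    using assms(3) by (simp add: is_decomposition_mono)
  then show "\<exists>UU. is_decomposition R {1..k'} X YY' UU"
    using assms(2) by (intro is_decomposition_reindex[OF _ inj_on_id]) auto
qed

lemma fam_arrow_at_Un: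
  "fam_arrow_at R k A YY \<Longrightarrow> fam_arrow_at R k B YY \<Longrightarrow> fam_arrow_at R k (A \<union> B) YY"
  by (auto simp: fam_arrow_at_def)

lemma fam_arrow_at_refl: "fam_arrow_at R 1 XX XX"
  unfolding fam_arrow_at_def is_decomposition_def
  by (auto intro!: exI[of _ "\<lambda>_. {X}" for X] simp: is_subspace_def r_disjoint_def)

lemma is_subspace_prod_metric:
  assumes "is_subspace U X" "is_subspace V Y"
  shows "is_subspace (prod_metric U V) (prod_metric X Y)"
proof -
  have "prod_metric U V = prod_metric (submetric X (mspace U)) (submetric Y (mspace V))"
    using assms unfolding is_subspace_def by metis
  then have "prod_metric U V = submetric (prod_metric X Y) (mspace U \<times> mspace V)"
    by (simp add: submetric_prod_metric)
  moreover have "mspace U \<times> mspace V \<subseteq> mspace X \<times> mspace Y"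
    using assms unfolding is_subspace_def by auto
  ultimately show ?thesis
    unfolding is_subspace_def by (simp add: Int_absorb2)
qed

lemma r_disjoint_prod_metric:
  assumes "r_disjoint a X UU" "r_disjoint b Y VV" "r \<le> a" "r \<le> b"
  shows "r_disjoint r (prod_metric X Y) {prod_metric U V | U V. U \<in> UU \<and> V \<in> VV}"
  unfolding r_disjoint_def
proof clarsimp
  fix U V U' V' x y x' y'
  assume UV: "U \<in> UU" "V \<in> VV" "U' \<in> UU" "V' \<in> VV" "prod_metric U V \<noteq> prod_metric U' V'"
    and xy: "x \<in> mspace U" "y \<in> mspace V" "x' \<in> mspace U'" "y' \<in> mspace V'"
  have "U \<noteq> U' \<or> V \<noteq> V'"
    using UV(5) by auto
  then have "mdist X x x' > a \<or> mdist Y y y' > b"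
    using assms(1,2) UV(1-4) xy unfolding r_disjoint_def by blast
  moreover have "mdist X x x' \<le> prod_dist (mdist X) (mdist Y) (x, y) (x', y')"
    and "mdist Y y y' \<le> prod_dist (mdist X) (mdist Y) (x, y) (x', y')"
    by (auto simp: prod_dist_def)
  ultimately show "r < prod_dist (mdist X) (mdist Y) (x, y) (x', y')"
    using assms(3,4) by linarith
qed

lemma is_decomposition_prod_metric:
  assumes X: "is_decomposition rX I X XX' UX"
    and Y: "\<And>i. i \<in> I \<Longrightarrow> is_decomposition (rY i) (J i) Y YY' (VV i)"
    and r: "\<And>i j. i \<in> I \<Longrightarrow> j \<in> J i \<Longrightarrow> r (i, j) \<le> rX i \<and> r (i, j) \<le> rY i j"
  shows "is_decomposition r (SIGMA i:I. J i) (prod_metric X Y) (metric_tensor XX' YY')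
           (\<lambda>(i, j). {prod_metric U V | U V. U \<in> UX i \<and> V \<in> VV i j})"
    (is "is_decomposition _ _ ?Z _ ?F")
  unfolding is_decomposition_def
proof (rule conjI[OF ballI])
  fix t assume "t \<in> (SIGMA i:I. J i)"
  then obtain i j where t: "t = (i, j)" "i \<in> I" "j \<in> J i" by blast
  have Xi: "UX i \<subseteq> XX'" "\<forall>U\<in>UX i. is_subspace U X" "r_disjoint (rX i) X (UX i)"
    using X t(2) unfolding is_decomposition_def by auto
  have Yij: "VV i j \<subseteq> YY'" "\<forall>V\<in>VV i j. is_subspace V Y" "r_disjoint (rY i j) Y (VV i j)"
    using Y[OF t(2)] t(3) unfolding is_decomposition_def by auto
  have "r_disjoint (r t) ?Z (?F t)"
    using r_disjoint_prod_metric[OF Xi(3) Yij(3)] r[OF t(2,3)] t(1) by simp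
  moreover have "?F t \<subseteq> metric_tensor XX' YY'"
    using Xi(1) Yij(1) t(1) by (auto simp: metric_tensor_def)
  moreover have "\<forall>W\<in>?F t. is_subspace W ?Z"
    using Xi(2) Yij(2) t(1) by (auto intro: is_subspace_prod_metric)
  ultimately show "?F t \<subseteq> metric_tensor XX' YY' \<and> (\<forall>W\<in>?F t. is_subspace W ?Z)
      \<and> r_disjoint (r t) ?Z (?F t)"
    by blast
next
  show "mspace ?Z \<subseteq> (\<Union>t\<in>SIGMA i:I. J i. \<Union>W\<in>?F t. mspace W)"
  proof
    fix p assume "p \<in> mspace ?Z"
    then obtain x y where p: "p = (x, y)" "x \<in> mspace X" "y \<in> mspace Y" by auto
    obtain i U where "i \<in> I" "U \<in> UX i" "x \<in> mspace U"
      using X p(2) unfolding is_decomposition_def by blast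
    moreover obtain j V where "j \<in> J i" "V \<in> VV i j" "y \<in> mspace V"
      using Y[OF \<open>i \<in> I\<close>] p(3) unfolding is_decomposition_def by blast
    ultimately have "(i, j) \<in> (SIGMA i:I. J i)" "prod_metric U V \<in> ?F (i, j)"
      "p \<in> mspace (prod_metric U V)"
      using p(1) by auto
    then show "p \<in> (\<Union>t\<in>SIGMA i:I. J i. \<Union>W\<in>?F t. mspace W)"
      by (intro UN_I)
  qed
qed

lemma fam_arrow_at_tensor:
  assumes X: "fam_arrow_at rX kX XX XX'"
    and Y: "\<And>i. i \<in> {1..kX} \<Longrightarrow> fam_arrow_at (\<lambda>j. R (g (i, j))) (kY i) YY (YC i)"
    and g: "inj_on g (SIGMA i:{1..kX}. {1..kY i})" "g ` (SIGMA i:{1..kX}. {1..kY i}) \<subseteq> {1..K}"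
    and R: "\<And>i j. i \<in> {1..kX} \<Longrightarrow> j \<in> {1..kY i} \<Longrightarrow> R (g (i, j)) \<le> rX i"
  shows "fam_arrow_at R K (metric_tensor XX YY) (metric_tensor XX' (\<Union>i\<in>{1..kX}. YC i))"
  unfolding fam_arrow_at_def
proof
  fix Z assume "Z \<in> metric_tensor XX YY"
  then obtain X Y where Z: "Z = prod_metric X Y" "X \<in> XX" "Y \<in> YY"
    unfolding metric_tensor_def by blast
  obtain UX where UX: "is_decomposition rX {1..kX} X XX' UX"
    using X Z(2) unfolding fam_arrow_at_def by blast
  have "\<forall>i\<in>{1..kX}. \<exists>V. is_decomposition (\<lambda>j. R (g (i, j))) {1..kY i} Y (\<Union>i\<in>{1..kX}. YC i) V"
    using Y Z(3) unfolding fam_arrow_at_def by (blast intro: is_decomposition_mono)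
  then obtain VV where VV: "\<forall>i\<in>{1..kX}.
      is_decomposition (\<lambda>j. R (g (i, j))) {1..kY i} Y (\<Union>i\<in>{1..kX}. YC i) (VV i)"
    by (rule bchoice[THEN exE])
  have "is_decomposition (R \<circ> g) (SIGMA i:{1..kX}. {1..kY i}) Z
      (metric_tensor XX' (\<Union>i\<in>{1..kX}. YC i))
      (\<lambda>(i, j). {prod_metric U V | U V. U \<in> UX i \<and> V \<in> VV i j})"
    unfolding Z(1) using VV R by (intro is_decomposition_prod_metric[OF UX]) auto
  then show "\<exists>UU. is_decomposition R {1..K} Z (metric_tensor XX' (\<Union>i\<in>{1..kX}. YC i)) UU"
    by (rule is_decomposition_reindex[OF _ g])
qed

lemma block_index_inj_on:
  fixes P :: "nat \<Rightarrow> nat"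
  assumes "mono P"
  shows "inj_on (\<lambda>(i, j). P (i - 1) + j) (SIGMA i:{1..k}. {1..P i - P (i - 1)})"
proof -
  have less: "P (i - 1) + j < P (i' - 1) + j'"
    if "i < i'" "j \<le> P i - P (i - 1)" "1 \<le> i" "1 \<le> j'" for i j i' j'
  proof -
    have "P (i - 1) \<le> P i" "P i \<le> P (i' - 1)"
      using that(1) assms by (auto intro: monoD)
    then show ?thesis
      using that(2,4) by linarith
  qed
  show ?thesis
  proof (rule inj_onI)
    fix a b
    assume a: "a \<in> (SIGMA i:{1..k}. {1..P i - P (i - 1)})"
      and b: "b \<in> (SIGMA i:{1..k}. {1..P i - P (i - 1)})"
      and eq: "(\<lambda>(i, j). P (i - 1) + j) a = (\<lambda>(i, j). P (i - 1) + j) b"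
    obtain i j i' j' where ab: "a = (i, j)" "b = (i', j')"
      by fastforce
    show "a = b"
      using a b eq less[of i i' j j'] less[of i' i j' j] unfolding ab
      by (cases i i' rule: linorder_cases) auto
  qed
qed

lemma block_index_image:
  fixes P :: "nat \<Rightarrow> nat"
  assumes "mono P"
  shows "(\<lambda>(i, j). P (i - 1) + j) ` (SIGMA i:{1..k}. {1..P i - P (i - 1)}) \<subseteq> {1..P k}"
proof
  fix n assume "n \<in> (\<lambda>(i, j). P (i - 1) + j) ` (SIGMA i:{1..k}. {1..P i - P (i - 1)})"
  then obtain i j where n: "n = P (i - 1) + j" "i \<le> k" "1 \<le> j" "j \<le> P i - P (i - 1)"
    by auto
  moreover have "P (i - 1) \<le> P i" "P i \<le> P k"
    using n(2) assms by (auto intro: monoD)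
  ultimately show "n \<in> {1..P k}"
    by simp
qed

lemma fam_arrow_at_tensor_blocks:
  fixes P :: "nat \<Rightarrow> nat"
  assumes "mono P"
    and X: "fam_arrow_at (\<lambda>i. \<Sum>n\<in>{P (i - 1)<..P i}. \<bar>R n\<bar>) kX XX XX'"
    and Y: "\<And>i. i \<in> {1..kX} \<Longrightarrow> fam_arrow_at (\<lambda>j. R (P (i - 1) + j)) (P i - P (i - 1)) YY (YC i)"
  shows "fam_arrow_at R (P kX) (metric_tensor XX YY) (metric_tensor XX' (\<Union>i\<in>{1..kX}. YC i))"
proof -
  define g where "g = (\<lambda>(i, j). P (i - 1) + j)"
  have "inj_on g (SIGMA i:{1..kX}. {1..P i - P (i - 1)})"
    unfolding g_def using assms(1) by (rule block_index_inj_on)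
  moreover have "g ` (SIGMA i:{1..kX}. {1..P i - P (i - 1)}) \<subseteq> {1..P kX}"
    unfolding g_def using assms(1) by (rule block_index_image)
  moreover have "fam_arrow_at (\<lambda>j. R (g (i, j))) (P i - P (i - 1)) YY (YC i)"
    if "i \<in> {1..kX}" for i
    using Y[OF that] by (simp add: g_def)
  moreover have "R (g (i, j)) \<le> (\<Sum>n\<in>{P (i - 1)<..P i}. \<bar>R n\<bar>)"
    if "j \<in> {1..P i - P (i - 1)}" for i j
  proof -
    have "P (i - 1) \<le> P i"
      using assms(1) by (auto intro: monoD)
    then have "g (i, j) \<in> {P (i - 1)<..P i}"
      using that by (auto simp: g_def)
    then have "\<bar>R (g (i, j))\<bar> \<le> (\<Sum>n\<in>{P (i - 1)<..P i}. \<bar>R n\<bar>)"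
      by (intro member_le_sum) auto
    then show ?thesis
      by simp
  qed
  ultimately show ?thesis
    by (intro fam_arrow_at_tensor[OF X]) auto
qed

lemma bounded_family_tensor:
  assumes "bounded_family XX" "bounded_family YY"
  shows "bounded_family (metric_tensor XX YY)"
proof -
  obtain B1 where B1: "\<forall>X\<in>XX. \<forall>x\<in>mspace X. \<forall>x'\<in>mspace X. mdist X x x' \<le> B1"
    using assms(1) unfolding bounded_family_def by blast
  obtain B2 where B2: "\<forall>Y\<in>YY. \<forall>y\<in>mspace Y. \<forall>y'\<in>mspace Y. mdist Y y y' \<le> B2"
    using assms(2) unfolding bounded_family_def by blast
  have "mdist (prod_metric X Y) (x, y) (x', y') \<le> B1 + B2"
    if "X \<in> XX" "Y \<in> YY" "x \<in> mspace X" "x' \<in> mspace X" "y \<in> mspace Y" "y' \<in> mspace Y"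
    for X Y x x' y y'
  proof -
    have "mdist (prod_metric X Y) (x, y) (x', y') \<le> mdist X x x' + mdist Y y y'"
      by (simp add: prod_dist_def sqrt_sum_squares_le_sum)
    also have "\<dots> \<le> B1 + B2"
      using B1 B2 that by (meson add_mono)
    finally show ?thesis .
  qed
  then show ?thesis
    unfolding bounded_family_def metric_tensor_def by fastforce
qed

lemma inC_boundedD: "inC \<alpha> XX \<Longrightarrow> \<nexists>\<beta>. \<beta> < \<alpha> \<Longrightarrow> bounded_family XX"
  by (cases rule: inC.cases) auto

lemma inC_arrowD:
  "inC \<alpha> XX \<Longrightarrow> \<exists>\<beta>. \<beta> < \<alpha> \<Longrightarrow> \<exists>\<beta><\<alpha>. \<exists>YY k. inC \<beta> YY \<and> fam_arrow_at R k XX YY"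
  by (cases rule: inC.cases) (auto simp: fam_arrow_iff_fam_arrow_at)

lemma inC_mono:
  assumes "inC \<beta> XX" "\<beta> \<le> \<gamma>"
  shows "inC \<gamma> XX"
proof (cases "\<beta> = \<gamma>")
  case False
  with assms(2) have "\<beta> < \<gamma>" by simp
  show ?thesis
  proof (rule inC.pos, use \<open>\<beta> < \<gamma>\<close> in blast, intro allI)
    fix R
    show "\<exists>\<beta>'<\<gamma>. \<exists>YY. inC \<beta>' YY \<and> fam_arrow R XX YY"
    proof (cases "\<exists>\<beta>'. \<beta>' < \<beta>")
      case True
      then show ?thesis
        using inC_arrowD[OF assms(1) True] \<open>\<beta> < \<gamma>\<close>
        by (meson fam_arrow_iff_fam_arrow_at less_trans)
    next
      case False
      then show ?thesis
        using assms(1) \<open>\<beta> < \<gamma>\<close> fam_arrow_at_refl unfolding fam_arrow_iff_fam_arrow_at by blast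
    qed
  qed
qed (use assms in simp)

lemma inC_empty: "inC \<alpha> {}"
proof -
  have "inC (LEAST \<beta>. True) {}"
    by (rule inC.zero) (auto simp: bounded_family_def dest: not_less_Least)
  then show ?thesis
    by (rule inC_mono) (simp add: Least_le)
qed

lemma inC_Un:
  "inC \<alpha> A \<Longrightarrow> inC \<alpha> B \<Longrightarrow> inC \<alpha> (A \<union> B)"
proof (induction \<alpha> arbitrary: A B rule: less_induct)
  case (less \<alpha>)
  show ?case
  proof (cases "\<exists>\<beta>. \<beta> < \<alpha>")
    case False
    obtain a b where "\<forall>X\<in>A. \<forall>x\<in>mspace X. \<forall>y\<in>mspace X. mdist X x y \<le> a"
      and "\<forall>X\<in>B. \<forall>x\<in>mspace X. \<forall>y\<in>mspace X. mdist X x y \<le> b"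
      using inC_boundedD[OF less.prems(1) False] inC_boundedD[OF less.prems(2) False]
      unfolding bounded_family_def by blast
    then have "bounded_family (A \<union> B)"
      unfolding bounded_family_def by (intro exI[of _ "max a b"]) fastforce
    then show ?thesis
      using False by (intro inC.zero) auto
  next
    case True
    show ?thesis
    proof (rule inC.pos[OF True], intro allI)
      fix R
      obtain \<beta>1 A' k1 where A': "\<beta>1 < \<alpha>" "inC \<beta>1 A'" "fam_arrow_at R k1 A A'"
        using inC_arrowD[OF less.prems(1) True] by blast
      obtain \<beta>2 B' k2 where B': "\<beta>2 < \<alpha>" "inC \<beta>2 B'" "fam_arrow_at R k2 B B'"
        using inC_arrowD[OF less.prems(2) True] by blast
      have "inC (max \<beta>1 \<beta>2) (A' \<union> B')"
        using A'(1,2) B'(1,2) by (intro less.IH) (auto elim: inC_mono)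
      moreover have "fam_arrow_at R (max k1 k2) (A \<union> B) (A' \<union> B')"
        using A'(3) B'(3) by (intro fam_arrow_at_Un) (auto elim: fam_arrow_at_mono)
      ultimately show "\<exists>\<beta><\<alpha>. \<exists>YY. inC \<beta> YY \<and> fam_arrow R (A \<union> B) YY"
        using A'(1) B'(1) fam_arrow_iff_fam_arrow_at by (metis max_less_iff_conj)
    qed
  qed
qed

lemma inC_UN: "finite I \<Longrightarrow> (\<And>i. i \<in> I \<Longrightarrow> inC \<alpha> (F i)) \<Longrightarrow> inC \<alpha> (\<Union>i\<in>I. F i)"
  by (induction I rule: finite_induct) (auto simp: inC_empty inC_Un)

lemma inC_tensor_step:
  fixes \<alpha> :: "'o::wellorder" and XX :: "'a metric set" and YY :: "'b metric set"
  assumes "\<exists>\<beta>. \<beta> < \<alpha>" "inC \<alpha> XX" "inC \<alpha> YY"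
    and IH: "\<And>\<beta> (XX' :: 'a metric set) (YY' :: 'b metric set).
      \<beta> < \<alpha> \<Longrightarrow> inC \<beta> XX' \<Longrightarrow> inC \<beta> YY' \<Longrightarrow> inC \<beta> (metric_tensor XX' YY')"
  shows "inC \<alpha> (metric_tensor XX YY)"
proof (rule inC.pos[OF assms(1)], intro allI)
  fix R :: "nat \<Rightarrow> real"
  have "\<forall>S. \<exists>\<beta> YC k. \<beta> < \<alpha> \<and> inC \<beta> YC \<and> fam_arrow_at S k YY YC"
    using inC_arrowD[OF assms(3,1)] by blast
  then obtain \<beta>Y YC kY
    where Y: "\<And>S. \<beta>Y S < \<alpha> \<and> inC (\<beta>Y S) (YC S) \<and> fam_arrow_at S (kY S) YY (YC S)"
    by metis
  define P where "P = rec_nat 0 (\<lambda>_ p. p + kY (\<lambda>j. R (p + j)))"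
  have P_Suc: "P (Suc i) = P i + kY (\<lambda>j. R (P i + j))" for i
    by (simp add: P_def)
  then have "mono P"
    by (simp add: mono_iff_le_Suc)
  define S where "S i = (\<lambda>j. R (P (i - 1) + j))" for i
  obtain \<beta>X XX' kX where X: "\<beta>X < \<alpha>" "inC \<beta>X XX'"
      "fam_arrow_at (\<lambda>i. \<Sum>n\<in>{P (i - 1)<..P i}. \<bar>R n\<bar>) kX XX XX'"
    using inC_arrowD[OF assms(2,1)] by blast
  have Y_blocks: "fam_arrow_at (\<lambda>j. R (P (i - 1) + j)) (P i - P (i - 1)) YY (YC (S i))"
    if "i \<in> {1..kX}" for i
    using Y[of "S i"] that P_Suc[of "i - 1"] by (simp add: S_def)
  have arrow: "fam_arrow_at R (P kX) (metric_tensor XX YY)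
      (metric_tensor XX' (\<Union>i\<in>{1..kX}. YC (S i)))"
    by (rule fam_arrow_at_tensor_blocks[OF \<open>mono P\<close> X(3) Y_blocks])
  define \<gamma> where "\<gamma> = Max (insert \<beta>X ((\<beta>Y \<circ> S) ` {1..kX}))"
  have "\<gamma> \<in> insert \<beta>X ((\<beta>Y \<circ> S) ` {1..kX})"
    unfolding \<gamma>_def by (intro Max_in) auto
  then have "\<gamma> < \<alpha>"
    using X(1) Y by auto
  have tensor: "inC \<gamma> (metric_tensor XX' (\<Union>i\<in>{1..kX}. YC (S i)))"
  proof (rule IH[OF \<open>\<gamma> < \<alpha>\<close>])
    show "inC \<gamma> XX'"
      using X(2) by (rule inC_mono) (simp add: \<gamma>_def)
    show "inC \<gamma> (\<Union>i\<in>{1..kX}. YC (S i))"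
    proof (rule inC_UN)
      fix i assume "i \<in> {1..kX}"
      then have "\<beta>Y (S i) \<le> \<gamma>"
        unfolding \<gamma>_def by (intro Max_ge) auto
      then show "inC \<gamma> (YC (S i))"
        using Y by (blast intro: inC_mono)
    qed simp
  qed
  show "\<exists>\<beta><\<alpha>. \<exists>ZZ. inC \<beta> ZZ \<and> fam_arrow R (metric_tensor XX YY) ZZ"
    using \<open>\<gamma> < \<alpha>\<close> tensor arrow fam_arrow_iff_fam_arrow_at by blast
qed

theorem mainTheorem10:
  fixes \<alpha> :: "'o::wellorder"
    and XX :: "'a metric set" and YY :: "'b metric set"
  assumes "inC \<alpha> XX" and "inC \<alpha> YY"
  shows "inC \<alpha> (metric_tensor XX YY)"
  using assms
proof (induction \<alpha> arbitrary: XX YY rule: less_induct)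
  case (less \<alpha>)
  show ?case
  proof (cases "\<exists>\<beta>. \<beta> < \<alpha>")
    case True
    then show ?thesis
      using less.prems less.IH by (rule inC_tensor_step)
  next
    case False
    then show ?thesis
      using inC_boundedD[OF less.prems(1) False] inC_boundedD[OF less.prems(2) False]
      by (intro inC.zero bounded_family_tensor) auto
  qed
qed

end
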